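(* There is a constant $c$ such that for every Boolean circuit $C$ with input nodes $\mathrm{in}_1,\dots,\mathrm{in}_n$ whose gates are only $\neg$-gates, $\vee$-gates and $\wedge$-gates, there exists an instruction sequence $X\in\mathrm{IS}_{br}$ in which the basic instruction $\mathrm{out}.\mathrm{set}{:}F$ does not occur (in any plain, positive test or negative test instruction) such that $X$ computes the $n$-ary Boolean function induced by $C$ and $|X|\le c\cdot(\mathrm{size}(C)+1)$.
   Context: $\mathbb B=\{T,F\}$. A Boolean circuit with input nodes $\mathrm{in}_1,\dots,\mathrm{in}_n$ is a finite directed acyclic graph whose non-input nodes (gates) are $\neg$-gates with one predecessor or $\vee$-/$\wedge$-gates with two predecessors, with one designated output node; the induced function $\mathbb B^n\to\mathbb B$ is the value of the output node when $\mathrm{in}_j$ carries $b_j$. Its size is its number of nodes. A primitive instruction is one of: a plain basic instruction $a$, a positive test instruction $+a$, a negative test instruction $-a$ (for a basic instruction $a$), a forward jump instruction $\#l$ ($l\in\mathbb N$), or the termination instruction $!$. An instruction sequence is a finite nonempty sequence $X=u_1;\dots;u_k$ of primitive instructions; its length is $|X|=k$. Basic instructions have the form $f.m$ where the focus $f$ is one of $\mathrm{in}{:}i$, $\mathrm{aux}{:}i$ ($i\ge 1$) or $\mathrm{out}$, each naming a Boolean register, and the method $m$ is one of $\mathrm{set}{:}T$, $\mathrm{set}{:}F$, $\mathrm{get}$. Executing $f.\mathrm{set}{:}b$ sets register $f$ to $b$ and yields reply $b$; executing $f.\mathrm{get}$ leaves the register unchanged and yields its content as reply. Execution of $X=u_1;\dots;u_k$: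 a counter starts at $1$. If the counter exceeds $k$, execution deadlocks. At position $i$: if $u_i=!$, execution terminates; if $u_i=\#l$, execution deadlocks if $l=0$ and otherwise the counter becomes $i+l$; if $u_i$ is $a$, $+a$ or $-a$, the basic instruction $a$ is executed yielding reply $r$, and the counter becomes $i+1$ for $u_i=a$; for $u_i=+a$ it becomes $i+1$ if $r=T$ and $i+2$ if $r=F$; for $u_i=-a$ it becomes $i+1$ if $r=F$ and $i+2$ if $r=T$. $\mathrm{IS}_{br}$ is the set of instruction sequences in which every basic instruction occurring belongs to $\{f.\mathrm{get}: f=\mathrm{in}{:}i \text{ or } f=\mathrm{aux}{:}i\}\cup\{f.\mathrm{set}{:}b: f=\mathrm{aux}{:}i \text{ or } f=\mathrm{out},\ b\in\mathbb B\}$. $X\in\mathrm{IS}_{br}$ computes $f:\mathbb B^n\to\mathbb B$ if for every $(b_1,\dots,b_n)\in\mathbb B^n$: when $X$ is executed with register $\mathrm{in}{:}j$ initialised to $b_j$ ($j\le n$) and all registers $\mathrm{aux}{:}i$ and $\mathrm{out}$ initialised to $F$, execution terminates (does not deadlock) without ever executing a basic instruction with focus $\mathrm{in}{:}j$ for $j>n$, and at termination register $\mathrm{out}$ contains $f(b_1,\dots,b_n)$. *)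

theory Defs
  imports Main
begin

text \<open>A circuit with inputs in_1..in_n is represented by the number n of inputs,
a list of gates and an output node.  Nodes are numbered 0..n+length gs-1:
node j-1 (j = 1..n) is the input node in_j, node n+i is the i-th gate.
Each gate refers only to nodes with smaller numbers (a topological order of
the DAG; every finite DAG admits one).\<close>

datatype gate = NotG nat | OrG nat nat | AndG nat nat

fun gate_preds :: "gate \<Rightarrow> nat list" where
  "gate_preds (NotG a) = [a]"
| "gate_preds (OrG a b) = [a, b]"
| "gate_preds (AndG a b) = [a, b]"

definition wf_circuit :: "nat \<Rightarrow> gate list \<Rightarrow> nat \<Rightarrow> bool" where
  "wf_circuit n gs out \<longleftrightarrow>
     (\<forall>i < length gs. \<forall>p \<in> set (gate_preds (gs ! i)). p < n + i)
     \<and> out < n + length gs"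

definition circuit_size :: "nat \<Rightarrow> gate list \<Rightarrow> nat" where
  "circuit_size n gs = n + length gs"

fun gate_val :: "bool list \<Rightarrow> gate \<Rightarrow> bool" where
  "gate_val vs (NotG a) = (\<not> vs ! a)"
| "gate_val vs (OrG a b) = (vs ! a \<or> vs ! b)"
| "gate_val vs (AndG a b) = (vs ! a \<and> vs ! b)"

fun eval_gates :: "bool list \<Rightarrow> gate list \<Rightarrow> bool list" where
  "eval_gates vs [] = vs"
| "eval_gates vs (g # gs) = eval_gates (vs @ [gate_val vs g]) gs"

definition circuit_fun :: "gate list \<Rightarrow> nat \<Rightarrow> bool list \<Rightarrow> bool" where
  "circuit_fun gs out bs = eval_gates bs gs ! out"

datatype focus = In nat | Aux nat | Out
datatype meth = SetM bool | Get
datatype basic = BI focus meth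
datatype prim = Plain basic | PosT basic | NegT basic | Jump nat | Term

type_synonym regs = "focus \<Rightarrow> bool"

fun basic_of :: "prim \<Rightarrow> basic option" where
  "basic_of (Plain a) = Some a"
| "basic_of (PosT a) = Some a"
| "basic_of (NegT a) = Some a"
| "basic_of (Jump l) = None"
| "basic_of Term = None"

fun allowed_br :: "basic \<Rightarrow> bool" where
  "allowed_br (BI (In i) Get) = (i \<ge> 1)"
| "allowed_br (BI (Aux i) Get) = (i \<ge> 1)"
| "allowed_br (BI (Aux i) (SetM b)) = (i \<ge> 1)"
| "allowed_br (BI Out (SetM b)) = True"
| "allowed_br _ = False"

definition IS_br :: "prim list \<Rightarrow> bool" where
  "IS_br X \<longleftrightarrow> X \<noteq> [] \<and> (\<forall>u \<in> set X. \<forall>a. basic_of u = Some a \<longrightarrow> allowed_br a)"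

fun exec_basic :: "basic \<Rightarrow> regs \<Rightarrow> bool \<times> regs" where
  "exec_basic (BI f (SetM b)) \<sigma> = (b, \<sigma>(f := b))"
| "exec_basic (BI f Get) \<sigma> = (\<sigma> f, \<sigma>)"

fun focus_ok :: "nat \<Rightarrow> basic \<Rightarrow> bool" where
  "focus_ok n (BI (In j) m) = (j \<le> n)"
| "focus_ok n (BI _ m) = True"

text \<open>term_run X n i \<sigma> \<sigma>': execution of X started at position i (1-based) with
registers \<sigma> terminates (no deadlock) with registers \<sigma>', never executing a basic
instruction with focus in:j for j > n.\<close>
inductive term_run :: "prim list \<Rightarrow> nat \<Rightarrow> nat \<Rightarrow> regs \<Rightarrow> regs \<Rightarrow> bool"
  for X :: "prim list" and n :: nat where
  halt: "\<lbrakk>1 \<le> i; i \<le> length X; X ! (i - 1) = Term\<rbrakk> \<Longrightarrow> term_run X n i \<sigma> \<sigma>"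
| jump: "\<lbrakk>1 \<le> i; i \<le> length X; X ! (i - 1) = Jump l; l \<noteq> 0;
          term_run X n (i + l) \<sigma> \<sigma>'\<rbrakk> \<Longrightarrow> term_run X n i \<sigma> \<sigma>'"
| plain: "\<lbrakk>1 \<le> i; i \<le> length X; X ! (i - 1) = Plain a; focus_ok n a;
          term_run X n (i + 1) (snd (exec_basic a \<sigma>)) \<sigma>'\<rbrakk> \<Longrightarrow> term_run X n i \<sigma> \<sigma>'"
| pos: "\<lbrakk>1 \<le> i; i \<le> length X; X ! (i - 1) = PosT a; focus_ok n a;
          term_run X n (if fst (exec_basic a \<sigma>) then i + 1 else i + 2) (snd (exec_basic a \<sigma>)) \<sigma>'\<rbrakk>
        \<Longrightarrow> term_run X n i \<sigma> \<sigma>'"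
| neg: "\<lbrakk>1 \<le> i; i \<le> length X; X ! (i - 1) = NegT a; focus_ok n a;
          term_run X n (if fst (exec_basic a \<sigma>) then i + 2 else i + 1) (snd (exec_basic a \<sigma>)) \<sigma>'\<rbrakk>
        \<Longrightarrow> term_run X n i \<sigma> \<sigma>'"

text \<open>Initial registers: in:j holds b_j (j = 1..n), all aux:i and out hold F.
(Registers in:j with j > n are never accessed in a successful run.)\<close>
fun init_regs :: "bool list \<Rightarrow> regs" where
  "init_regs bs (In j) = (1 \<le> j \<and> j \<le> length bs \<and> bs ! (j - 1))"
| "init_regs bs (Aux i) = False"
| "init_regs bs Out = False"

definition computes :: "prim list \<Rightarrow> nat \<Rightarrow> (bool list \<Rightarrow> bool) \<Rightarrow> bool" where
  "computes X n f \<longleftrightarrow>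
     (\<forall>bs. length bs = n \<longrightarrow> (\<exists>\<sigma>'. term_run X n 1 (init_regs bs) \<sigma>' \<and> \<sigma>' Out = f bs))"

end

theory Submission
  imports Defs
begin

text \<open>
  Node k of the circuit (inputs are nodes 0..n-1, the i-th gate is node n+i) is kept
  in register reg n k: in:k+1 for inputs and aux:k+1 for gates.  Gate i is translated
  into a block gate_code n (n+i) g of at most four instructions which reads its
  predecessors with test instructions and, only when the gate value is T, executes
  aux:n+i+1.set:T; since auxiliary registers start with F this leaves the gate value
  in its register.  The blocks for all gates are followed by a three-instruction
  block that copies the output node into out using out.set:T only.

  Counting instructions gives the bound 4 * (size + 1).
\<close>

definition reg :: "nat \<Rightarrow> nat \<Rightarrow> focus" where
  "reg n k = (if k < n then In (Suc k) else Aux (Suc k))"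

definition get :: "nat \<Rightarrow> nat \<Rightarrow> basic" where
  "get n k = BI (reg n k) Get"

definition set_node :: "nat \<Rightarrow> prim" where
  "set_node k = Plain (BI (Aux (Suc k)) (SetM True))"

fun gate_code :: "nat \<Rightarrow> nat \<Rightarrow> gate \<Rightarrow> prim list" where
  "gate_code n k (NotG a) = [NegT (get n a), set_node k]"
| "gate_code n k (OrG a b) = [NegT (get n a), PosT (get n b), set_node k]"
| "gate_code n k (AndG a b) = [NegT (get n a), Jump 3, PosT (get n b), set_node k]"

definition output_code :: "nat \<Rightarrow> nat \<Rightarrow> prim list" where
  "output_code n out = [PosT (get n out), Plain (BI Out (SetM True)), Term]"

definition gates_code :: "nat \<Rightarrow> gate list \<Rightarrow> nat \<Rightarrow> prim list" where
  "gates_code n gs m = concat (map (\<lambda>i. gate_code n (n + i) (gs ! i)) [0..<m])"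

definition compile :: "nat \<Rightarrow> gate list \<Rightarrow> nat \<Rightarrow> prim list" where
  "compile n gs out = gates_code n gs (length gs) @ output_code n out"

definition code_at :: "prim list \<Rightarrow> nat \<Rightarrow> prim list \<Rightarrow> bool" where
  "code_at X i xs \<longleftrightarrow> (\<exists>P Q. X = P @ xs @ Q \<and> i = Suc (length P))"

lemma code_at_append: "code_at X i (xs @ ys) \<Longrightarrow> code_at X (i + length xs) ys"
  unfolding code_at_def by (metis append.assoc length_append add_Suc)

lemma code_at_Cons: "code_at X i (u # xs) \<Longrightarrow> code_at X (Suc i) xs"
  using code_at_append[of X i "[u]" xs] by simp

lemma code_at_head:
  "code_at X i (u # xs) \<Longrightarrow> 1 \<le> i \<and> i \<le> length X \<and> X ! (i - 1) = u"
  unfolding code_at_def by auto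

lemma run_neg_get:
  assumes "code_at X i (NegT (get n a) # xs)"
    and "term_run X n (if \<sigma> (reg n a) then i + 2 else i + 1) \<sigma> \<sigma>'"
  shows "term_run X n i \<sigma> \<sigma>'"
proof -
  have "1 \<le> i" "i \<le> length X" "X ! (i - 1) = NegT (get n a)"
    using code_at_head[OF assms(1)] by auto
  then show ?thesis
    by (rule term_run.neg) (use assms(2) in \<open>simp_all add: get_def reg_def\<close>)
qed

lemma run_pos_get:
  assumes "code_at X i (PosT (get n a) # xs)"
    and "term_run X n (if \<sigma> (reg n a) then i + 1 else i + 2) \<sigma> \<sigma>'"
  shows "term_run X n i \<sigma> \<sigma>'"
proof -
  have "1 \<le> i" "i \<le> length X" "X ! (i - 1) = PosT (get n a)"
    using code_at_head[OF assms(1)] by auto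
  then show ?thesis
    by (rule term_run.pos) (use assms(2) in \<open>simp_all add: get_def reg_def\<close>)
qed

lemma run_set_node:
  assumes "code_at X i (set_node k # xs)"
    and "term_run X n (i + 1) (\<sigma>(Aux (Suc k) := True)) \<sigma>'"
  shows "term_run X n i \<sigma> \<sigma>'"
proof -
  have "1 \<le> i" "i \<le> length X" "X ! (i - 1) = Plain (BI (Aux (Suc k)) (SetM True))"
    using code_at_head[OF assms(1)] by (auto simp: set_node_def)
  then show ?thesis
    by (rule term_run.plain) (use assms(2) in simp_all)
qed

lemma run_jump:
  assumes "code_at X i (Jump l # xs)" and "l \<noteq> 0" and "term_run X n (i + l) \<sigma> \<sigma>'"
  shows "term_run X n i \<sigma> \<sigma>'"
proof -
  have "1 \<le> i" "i \<le> length X" "X ! (i - 1) = Jump l"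
    using code_at_head[OF assms(1)] by auto
  then show ?thesis using assms(2,3) by (rule term_run.jump)
qed

text \<open>Correctness of a gate block: if its result register still holds F and the
  predecessor registers hold the node values vs, the block falls through to its end
  having stored the gate value in aux:k+1 (a store of F is simply skipped).\<close>

lemma gate_code_run:
  assumes code: "code_at X i (gate_code n k g)"
    and fresh: "\<sigma> (Aux (Suc k)) = False"
    and preds: "\<forall>a \<in> set (gate_preds g). \<sigma> (reg n a) = vs ! a"
    and rest: "term_run X n (i + length (gate_code n k g)) (\<sigma>(Aux (Suc k) := gate_val vs g)) \<sigma>'"
  shows "term_run X n i \<sigma> \<sigma>'"
proof -
  \<comment> \<open>when the gate value is F the registers are already in the required state\<close>
  have exit: "term_run X n (i + length (gate_code n k g))
                (if gate_val vs g then \<sigma>(Aux (Suc k) := True) else \<sigma>) \<sigma>'"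
    using rest fun_upd_idem[of \<sigma> "Aux (Suc k)" False, OF fresh] by (cases "gate_val vs g") simp_all
  show ?thesis
  proof (cases g)
    case (NotG a)
    have c0: "code_at X i [NegT (get n a), set_node k]"
      using code NotG by simp
    note c1 = code_at_Cons[OF c0]
    show ?thesis
      using exit preds NotG by (auto intro!: run_neg_get[OF c0] run_set_node[OF c1])
  next
    case (OrG a b)
    have c0: "code_at X i [NegT (get n a), PosT (get n b), set_node k]"
      using code OrG by simp
    note c1 = code_at_Cons[OF c0]
    note c2 = code_at_Cons[OF c1]
    show ?thesis
      using exit preds OrG
      by (auto intro!: run_neg_get[OF c0] run_pos_get[OF c1] run_set_node[OF c2])
  next
    case (AndG a b)
    have c0: "code_at X i [NegT (get n a), Jump 3, PosT (get n b), set_node k]"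
      using code AndG by simp
    note c1 = code_at_Cons[OF c0]
    note c2 = code_at_Cons[OF c1]
    note c3 = code_at_Cons[OF c2]
    show ?thesis
      using exit preds AndG
      by (auto intro!: run_neg_get[OF c0] run_jump[OF c1] run_pos_get[OF c2] run_set_node[OF c3]
               simp: eval_nat_numeral)
  qed
qed

lemma output_code_run:
  assumes code: "code_at X i (output_code n out)" and out_F: "\<sigma> Out = False"
  shows "\<exists>\<sigma>'. term_run X n i \<sigma> \<sigma>' \<and> \<sigma>' Out = \<sigma> (reg n out)"
proof -
  have c0: "code_at X i (PosT (get n out) # [Plain (BI Out (SetM True)), Term])"
    using code by (simp add: output_code_def)
  note c1 = code_at_head[OF code_at_Cons[OF c0]]
  note c2 = code_at_head[OF code_at_Cons[OF code_at_Cons[OF c0]]]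
  have halt: "term_run X n (Suc (Suc i)) \<tau> \<tau>" for \<tau>
  proof (rule term_run.halt)
    show "1 \<le> Suc (Suc i)" "Suc (Suc i) \<le> length X" "X ! (Suc (Suc i) - 1) = Term"
      using c2 by simp_all
  qed
  have set_out: "term_run X n (Suc i) \<sigma> (\<sigma>(Out := True))"
  proof (rule term_run.plain)
    show "1 \<le> Suc i" "Suc i \<le> length X" "X ! (Suc i - 1) = Plain (BI Out (SetM True))"
      using c1 by simp_all
    show "term_run X n (Suc i + 1) (snd (exec_basic (BI Out (SetM True)) \<sigma>)) (\<sigma>(Out := True))"
      using halt by simp
  qed simp
  show ?thesis
  proof (cases "\<sigma> (reg n out)")
    case True
    then have "term_run X n i \<sigma> (\<sigma>(Out := True))"
      using set_out by (intro run_pos_get[OF c0]) simp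
    then show ?thesis using True by auto
  next
    case False
    then have "term_run X n i \<sigma> \<sigma>"
      using halt by (intro run_pos_get[OF c0]) simp
    then show ?thesis using False out_F by auto
  qed
qed

lemma eval_gates_length [simp]: "length (eval_gates vs gs) = length vs + length gs"
  by (induction gs arbitrary: vs) auto

lemma eval_gates_prefix: "k < length vs \<Longrightarrow> eval_gates vs gs ! k = vs ! k"
  by (induction gs arbitrary: vs) (auto simp: nth_append)

lemma gate_val_cong:
  "\<forall>p \<in> set (gate_preds g). xs ! p = ys ! p \<Longrightarrow> gate_val xs g = gate_val ys g"
  by (cases g) auto

lemma eval_gates_nth:
  assumes "i < length gs" and "\<forall>p \<in> set (gate_preds (gs ! i)). p < length vs + i"
  shows "eval_gates vs gs ! (length vs + i) = gate_val (eval_gates vs gs) (gs ! i)"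
  using assms
proof (induction gs arbitrary: vs i)
  case Nil
  then show ?case by simp
next
  case (Cons g gs)
  show ?case
  proof (cases i)
    case 0
    then have "gate_val vs g = gate_val (eval_gates vs (g # gs)) g"
      using Cons.prems by (intro gate_val_cong) (auto simp: eval_gates_prefix nth_append)
    then show ?thesis using 0 by (simp add: eval_gates_prefix)
  next
    case (Suc j)
    then show ?thesis using Cons.IH[of j "vs @ [gate_val vs g]"] Cons.prems by simp
  qed
qed

text \<open>Register contents after the blocks of the first m gates have run, when vs
  lists the values of all nodes: the inputs as initialised, nodes n..n+m-1 in their
  auxiliary registers, everything else F.\<close>

definition node_regs :: "nat \<Rightarrow> bool list \<Rightarrow> nat \<Rightarrow> regs" where
  "node_regs n vs m =
     (\<lambda>f. case f of Aux j \<Rightarrow> n < j \<and> j \<le> n + m \<and> vs ! (j - 1) | _ \<Rightarrow> init_regs (take n vs) f)"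

lemma node_regs_0: "node_regs n vs 0 = init_regs (take n vs)"
proof
  show "node_regs n vs 0 f = init_regs (take n vs) f" for f
    by (cases f) (auto simp: node_regs_def)
qed

lemma node_regs_Suc: "node_regs n vs (Suc m) = (node_regs n vs m)(Aux (Suc (n + m)) := vs ! (n + m))"
proof
  show "node_regs n vs (Suc m) f = ((node_regs n vs m)(Aux (Suc (n + m)) := vs ! (n + m))) f" for f
    by (cases f) (auto simp: node_regs_def)
qed

lemma node_regs_reg:
  assumes "a < n + m" and "n \<le> length vs"
  shows "node_regs n vs m (reg n a) = vs ! a"
  using assms by (auto simp: node_regs_def reg_def)

lemma node_regs_fresh: "node_regs n vs m (Aux (Suc (n + m))) = False"
  by (simp add: node_regs_def)

lemma node_regs_Out: "node_regs n vs m Out = False"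
  by (simp add: node_regs_def)

lemma gates_code_Suc: "gates_code n gs (Suc m) = gates_code n gs m @ gate_code n (n + m) (gs ! m)"
  by (simp add: gates_code_def)

lemma gates_code_prefix: "m \<le> m' \<Longrightarrow> \<exists>R. gates_code n gs m' = gates_code n gs m @ R"
  by (induction m' rule: dec_induct) (auto simp: gates_code_Suc)

lemma code_at_gate:
  assumes "m < length gs"
  shows "code_at (compile n gs out) (Suc (length (gates_code n gs m))) (gate_code n (n + m) (gs ! m))"
proof -
  obtain R where "gates_code n gs (length gs) = gates_code n gs (Suc m) @ R"
    using gates_code_prefix[of "Suc m" "length gs"] assms by auto
  then show ?thesis
    unfolding code_at_def compile_def gates_code_Suc by fastforce
qed

lemma code_at_output:
  "code_at (compile n gs out) (Suc (length (gates_code n gs (length gs)))) (output_code n out)"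
  unfolding code_at_def compile_def by fastforce

text \<open>Going backwards over the gates, the run from the block of gate m with registers
  node_regs m reaches the final registers produced by the output block.\<close>

lemma compile_computes:
  assumes wf: "wf_circuit n gs out"
  shows "computes (compile n gs out) n (circuit_fun gs out)"
  unfolding computes_def
proof (intro allI impI)
  fix bs :: "bool list"
  assume len: "length bs = n"
  define X where "X = compile n gs out"
  define vs where "vs = eval_gates bs gs"
  define L where "L = length gs"
  have n_vs: "n \<le> length vs" and inputs: "take n vs = bs"
    using len by (auto simp: vs_def eval_gates_prefix intro: nth_equalityI)
  have out_node: "out < n + L"
    using wf by (simp add: wf_circuit_def L_def)
  obtain \<sigma>' where final: "term_run X n (Suc (length (gates_code n gs L))) (node_regs n vs L) \<sigma>'"
    and result: "\<sigma>' Out = node_regs n vs L (reg n out)"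
    unfolding X_def L_def
    using output_code_run[OF code_at_output, where \<sigma> = "node_regs n vs (length gs)"] node_regs_Out
    by blast
  have "term_run X n (Suc (length (gates_code n gs m))) (node_regs n vs m) \<sigma>'" if "m \<le> L" for m
    using that
  proof (induction m rule: inc_induct)
    case base
    then show ?case using final .
  next
    case (step m)
    have preds: "\<forall>p \<in> set (gate_preds (gs ! m)). p < n + m"
      using wf step.hyps by (simp add: wf_circuit_def L_def)
    have gate_value: "vs ! (n + m) = gate_val vs (gs ! m)"
      using eval_gates_nth[of m gs bs] preds step.hyps len by (simp add: vs_def L_def)
    show ?case
    proof (rule gate_code_run[where vs = vs])
      show "code_at X (Suc (length (gates_code n gs m))) (gate_code n (n + m) (gs ! m))"
        using code_at_gate step.hyps by (simp add: X_def L_def)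
      show "node_regs n vs m (Aux (Suc (n + m))) = False"
        by (rule node_regs_fresh)
      show "\<forall>a \<in> set (gate_preds (gs ! m)). node_regs n vs m (reg n a) = vs ! a"
        using preds node_regs_reg[OF _ n_vs] by blast
      show "term_run X n (Suc (length (gates_code n gs m)) + length (gate_code n (n + m) (gs ! m)))
              ((node_regs n vs m)(Aux (Suc (n + m)) := gate_val vs (gs ! m))) \<sigma>'"
        using step.IH by (simp only: gates_code_Suc node_regs_Suc gate_value length_append add_Suc)
    qed
  qed
  from this[of 0] have "term_run X n 1 (init_regs bs) \<sigma>'"
    by (simp add: gates_code_def node_regs_0 inputs)
  then show "\<exists>\<sigma>'. term_run (compile n gs out) n 1 (init_regs bs) \<sigma>' \<and> \<sigma>' Out = circuit_fun gs out bs"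
    using result node_regs_reg[OF out_node n_vs] by (auto simp: X_def circuit_fun_def vs_def)
qed

lemma compile_instructions:
  assumes "u \<in> set (compile n gs out)" and "basic_of u = Some a"
  shows "allowed_br a \<and> a \<noteq> BI Out (SetM False)"
proof -
  have gate: "allowed_br a \<and> a \<noteq> BI Out (SetM False)"
    if "u \<in> set (gate_code n k g)" "basic_of u = Some a" for u k g a
    using that by (cases g) (auto simp: get_def reg_def set_node_def)
  show ?thesis
    using assms gate by (auto simp: compile_def gates_code_def output_code_def get_def reg_def)
qed

lemma gates_code_length: "length (gates_code n gs m) \<le> 4 * m"
proof (induction m)
  case 0
  then show ?case by (simp add: gates_code_def)
next
  case (Suc m)
  have "length (gate_code n (n + m) (gs ! m)) \<le> 4"
    by (cases "gs ! m") auto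
  then show ?case using Suc by (simp add: gates_code_Suc)
qed

lemma compile_length: "length (compile n gs out) \<le> 4 * (circuit_size n gs + 1)"
  using gates_code_length[of n gs "length gs"]
  by (simp add: compile_def output_code_def circuit_size_def)

theorem theorem5:
  "\<exists>c :: nat. \<forall>n gs out. wf_circuit n gs out \<longrightarrow>
     (\<exists>X. IS_br X
          \<and> (\<forall>u \<in> set X. basic_of u \<noteq> Some (BI Out (SetM False)))
          \<and> computes X n (circuit_fun gs out)
          \<and> length X \<le> c * (circuit_size n gs + 1))"
proof (intro exI[of _ 4] allI impI)
  fix n gs out
  assume wf: "wf_circuit n gs out"
  let ?X = "compile n gs out"
  have "IS_br ?X"
    using compile_instructions by (auto simp: IS_br_def compile_def output_code_def)
  moreover have "\<forall>u \<in> set ?X. basic_of u \<noteq> Some (BI Out (SetM False))"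
    using compile_instructions by blast
  ultimately show "\<exists>X. IS_br X \<and> (\<forall>u \<in> set X. basic_of u \<noteq> Some (BI Out (SetM False)))
      \<and> computes X n (circuit_fun gs out) \<and> length X \<le> 4 * (circuit_size n gs + 1)"
    using compile_computes[OF wf] compile_length by blast
qed

end
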